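(* Let $\Sigma$ be a finite alphabet. A set $S$ of unranked trees over $\Sigma$ is definable by a $<$-invariant MSO sentence over the class of all unranked trees over $\Sigma$ if and only if it is definable by a sibling-order-invariant MSO sentence over the class of all unranked trees over $\Sigma$.
   Context: An unranked tree domain $D$ is a finite prefix-closed set of words over the positive integers such that $s\cdot i\in D$ implies $s\cdot j\in D$ for all $1\le j<i$. An unranked tree over $\Sigma$ is a structure $T=(D,\prec,(P_a)_{a\in\Sigma})$ where $D$ is an unranked tree domain, $\prec$ is the descendant relation ($s\prec s\cdot s'$ for $s\cdot s'\in D$ with $s'$ nonempty), and the sets $P_a$ partition $D$ (node labels). A sibling order on $T$ is a binary relation $\triangleleft$ such that $s'\triangleleft s''$ implies $s'=s\cdot i$, $s''=s\cdot j$ for some node $s$ and distinct $i,j$, and such that $\triangleleft$ restricted to the children of each node is a linear order. An MSO sentence $\varphi$ over the tree vocabulary plus a binary symbol $<$ is $<$-invariant over trees if for every unranked tree $T$ and any two linear orders $<_1,<_2$ of $\mathrm{dom}(T)$, $(T,<_1)\models\varphi$ iff $(T,<_2)\models\varphi$; it then defines the set of trees $T$ with $(T,<)\models\varphi$ for some (equivalently every) linear order $<$. Sibling-order-invariant MSO sentences (over the tree vocabulary plus a binary symbol $\triangleleft$) and the sets they define are defined in the same way, with linear orders replaced by sibling orders. *)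

theory Defs
  imports Main
begin

definition tree_domain :: "nat list set \<Rightarrow> bool" where
  "tree_domain D \<longleftrightarrow>
     finite D \<and> [] \<in> D \<and>
     (\<forall>s\<in>D. \<forall>i\<in>set s. 1 \<le> i) \<and>
     (\<forall>s t. s @ t \<in> D \<longrightarrow> s \<in> D) \<and>
     (\<forall>s i j. s @ [i] \<in> D \<longrightarrow> 1 \<le> j \<longrightarrow> j < i \<longrightarrow> s @ [j] \<in> D)"

text \<open>An unranked tree over the alphabet 'a: a domain D and the label predicates P_a,
  which partition D.\<close>

type_synonym 'a utree = "nat list set \<times> ('a \<Rightarrow> nat list set)"

definition dom_t :: "'a utree \<Rightarrow> nat list set" where
  "dom_t T = fst T"

definition lab_t :: "'a utree \<Rightarrow> 'a \<Rightarrow> nat list set" where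
  "lab_t T = snd T"

definition is_utree :: "'a utree \<Rightarrow> bool" where
  "is_utree T \<longleftrightarrow> tree_domain (dom_t T) \<and>
     (\<Union>a. lab_t T a) = dom_t T \<and>
     (\<forall>a b. a \<noteq> b \<longrightarrow> lab_t T a \<inter> lab_t T b = {})"

definition desc :: "nat list \<Rightarrow> nat list \<Rightarrow> bool" where
  "desc s t \<longleftrightarrow> (\<exists>s'. s' \<noteq> [] \<and> t = s @ s')"

definition children :: "nat list set \<Rightarrow> nat list \<Rightarrow> nat list set" where
  "children D s = {t \<in> D. \<exists>i. t = s @ [i]}"

definition linord_of :: "'a utree \<Rightarrow> (nat list \<times> nat list) set \<Rightarrow> bool" where
  "linord_of T R \<longleftrightarrow> R \<subseteq> dom_t T \<times> dom_t T \<and> strict_linear_order_on (dom_t T) R"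

definition sibord_of :: "'a utree \<Rightarrow> (nat list \<times> nat list) set \<Rightarrow> bool" where
  "sibord_of T R \<longleftrightarrow> R \<subseteq> dom_t T \<times> dom_t T \<and>
     (\<forall>(u, v)\<in>R. \<exists>s i j. s \<in> dom_t T \<and> u = s @ [i] \<and> v = s @ [j] \<and> i \<noteq> j) \<and>
     (\<forall>s\<in>dom_t T. strict_linear_order_on (children (dom_t T) s)
                     (R \<inter> (children (dom_t T) s \<times> children (dom_t T) s)))"

text \<open>First-order variables and second-order (set) variables are indexed by nat.
  Rel x y is the additional binary symbol (< resp. the sibling order).\<close>

datatype 'a mso =
    Desc nat nat
  | Lab 'a nat
  | Rel nat nat
  | Eq nat nat
  | Mem nat nat
  | Neg "'a mso"
  | Conj "'a mso" "'a mso"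
  | Disj "'a mso" "'a mso"
  | Ex1 nat "'a mso"
  | Ex2 nat "'a mso"

fun fv1 :: "'a mso \<Rightarrow> nat set" where
  "fv1 (Desc x y) = {x, y}"
| "fv1 (Lab a x) = {x}"
| "fv1 (Rel x y) = {x, y}"
| "fv1 (Eq x y) = {x, y}"
| "fv1 (Mem x X) = {x}"
| "fv1 (Neg \<phi>) = fv1 \<phi>"
| "fv1 (Conj \<phi> \<psi>) = fv1 \<phi> \<union> fv1 \<psi>"
| "fv1 (Disj \<phi> \<psi>) = fv1 \<phi> \<union> fv1 \<psi>"
| "fv1 (Ex1 x \<phi>) = fv1 \<phi> - {x}"
| "fv1 (Ex2 X \<phi>) = fv1 \<phi>"

fun fv2 :: "'a mso \<Rightarrow> nat set" where
  "fv2 (Desc x y) = {}"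
| "fv2 (Lab a x) = {}"
| "fv2 (Rel x y) = {}"
| "fv2 (Eq x y) = {}"
| "fv2 (Mem x X) = {X}"
| "fv2 (Neg \<phi>) = fv2 \<phi>"
| "fv2 (Conj \<phi> \<psi>) = fv2 \<phi> \<union> fv2 \<psi>"
| "fv2 (Disj \<phi> \<psi>) = fv2 \<phi> \<union> fv2 \<psi>"
| "fv2 (Ex1 x \<phi>) = fv2 \<phi>"
| "fv2 (Ex2 X \<phi>) = fv2 \<phi> - {X}"

definition sentence :: "'a mso \<Rightarrow> bool" where
  "sentence \<phi> \<longleftrightarrow> fv1 \<phi> = {} \<and> fv2 \<phi> = {}"

fun sat :: "'a utree \<Rightarrow> (nat list \<times> nat list) set \<Rightarrow> (nat \<Rightarrow> nat list) \<Rightarrow>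
            (nat \<Rightarrow> nat list set) \<Rightarrow> 'a mso \<Rightarrow> bool" where
  "sat T R v V (Desc x y) = desc (v x) (v y)"
| "sat T R v V (Lab a x) = (v x \<in> lab_t T a)"
| "sat T R v V (Rel x y) = ((v x, v y) \<in> R)"
| "sat T R v V (Eq x y) = (v x = v y)"
| "sat T R v V (Mem x X) = (v x \<in> V X)"
| "sat T R v V (Neg \<phi>) = (\<not> sat T R v V \<phi>)"
| "sat T R v V (Conj \<phi> \<psi>) = (sat T R v V \<phi> \<and> sat T R v V \<psi>)"
| "sat T R v V (Disj \<phi> \<psi>) = (sat T R v V \<phi> \<or> sat T R v V \<psi>)"
| "sat T R v V (Ex1 x \<phi>) = (\<exists>u\<in>dom_t T. sat T R (v(x := u)) V \<phi>)"
| "sat T R v V (Ex2 X \<phi>) = (\<exists>U. U \<subseteq> dom_t T \<and> sat T R v (V(X := U)) \<phi>)"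

text \<open>Satisfaction of a sentence in the expanded structure (T, R); the assignment is
  irrelevant for sentences.\<close>

definition models :: "'a utree \<Rightarrow> (nat list \<times> nat list) set \<Rightarrow> 'a mso \<Rightarrow> bool" where
  "models T R \<phi> \<longleftrightarrow> sat T R (\<lambda>_. []) (\<lambda>_. {}) \<phi>"

definition order_invariant :: "'a mso \<Rightarrow> bool" where
  "order_invariant \<phi> \<longleftrightarrow> (\<forall>T R1 R2. is_utree T \<longrightarrow> linord_of T R1 \<longrightarrow> linord_of T R2 \<longrightarrow>
      (models T R1 \<phi> \<longleftrightarrow> models T R2 \<phi>))"

definition sibling_invariant :: "'a mso \<Rightarrow> bool" where
  "sibling_invariant \<phi> \<longleftrightarrow> (\<forall>T R1 R2. is_utree T \<longrightarrow> sibord_of T R1 \<longrightarrow> sibord_of T R2 \<longrightarrow>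
      (models T R1 \<phi> \<longleftrightarrow> models T R2 \<phi>))"

definition order_inv_definable :: "'a utree set \<Rightarrow> bool" where
  "order_inv_definable S \<longleftrightarrow> (\<exists>\<phi>. sentence \<phi> \<and> order_invariant \<phi> \<and>
      S = {T. is_utree T \<and> (\<exists>R. linord_of T R \<and> models T R \<phi>)})"

definition sibling_inv_definable :: "'a utree set \<Rightarrow> bool" where
  "sibling_inv_definable S \<longleftrightarrow> (\<exists>\<phi>. sentence \<phi> \<and> sibling_invariant \<phi> \<and>
      S = {T. is_utree T \<and> (\<exists>R. sibord_of T R \<and> models T R \<phi>)})"

end

theory Submission
  imports Defs "HOL-Library.Sublist"
begin

text \<open>
  Over a fixed tree the two kinds of orders are MSO-interpretable in each other. A linear order
  restricts to a sibling order by keeping only the pairs of distinct children of a common node,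
  and a sibling order induces the document order (ancestors first, otherwise compare the two
  children of the node where the branches split), which is a linear order; both constructions
  are defined by MSO formulas in the given order. Substituting such a formula for the binary
  symbol turns an invariant sentence for one kind of order into an invariant sentence for the
  other that defines the same trees, because every tree carries orders of both kinds.
\<close>

lemma utree_root: "is_utree T \<Longrightarrow> [] \<in> dom_t T"
  by (simp add: is_utree_def tree_domain_def)

lemma utree_prefix_closed: "is_utree T \<Longrightarrow> s @ t \<in> dom_t T \<Longrightarrow> s \<in> dom_t T"
  unfolding is_utree_def tree_domain_def by blast

section \<open>Substituting a formula for the binary symbol\<close>

fun subst_Rel :: "(nat \<Rightarrow> nat \<Rightarrow> 'a mso) \<Rightarrow> 'a mso \<Rightarrow> 'a mso" where
  "subst_Rel f (Rel x y) = f x y"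
| "subst_Rel f (Neg \<phi>) = Neg (subst_Rel f \<phi>)"
| "subst_Rel f (Conj \<phi> \<psi>) = Conj (subst_Rel f \<phi>) (subst_Rel f \<psi>)"
| "subst_Rel f (Disj \<phi> \<psi>) = Disj (subst_Rel f \<phi>) (subst_Rel f \<psi>)"
| "subst_Rel f (Ex1 x \<phi>) = Ex1 x (subst_Rel f \<phi>)"
| "subst_Rel f (Ex2 X \<phi>) = Ex2 X (subst_Rel f \<phi>)"
| "subst_Rel f \<phi> = \<phi>"

definition binary_fm :: "(nat \<Rightarrow> nat \<Rightarrow> 'a mso) \<Rightarrow> bool" where
  "binary_fm f \<longleftrightarrow> (\<forall>x y. fv1 (f x y) \<subseteq> {x, y} \<and> fv2 (f x y) = {})"

definition defines_in ::
    "'a utree \<Rightarrow> (nat list \<times> nat list) set \<Rightarrow> (nat \<Rightarrow> nat \<Rightarrow> 'a mso) \<Rightarrow>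
     (nat list \<times> nat list) set \<Rightarrow> bool" where
  "defines_in T R f Q \<longleftrightarrow>
     (\<forall>v V x y. range v \<subseteq> dom_t T \<longrightarrow> sat T R v V (f x y) = ((v x, v y) \<in> Q))"

lemma fv_subst_Rel:
  assumes "binary_fm f"
  shows "fv1 (subst_Rel f \<phi>) \<subseteq> fv1 \<phi> \<and> fv2 (subst_Rel f \<phi>) \<subseteq> fv2 \<phi>"
  using assms by (induction f \<phi> rule: subst_Rel.induct) (auto simp: binary_fm_def)

lemma sentence_subst_Rel: "binary_fm f \<Longrightarrow> sentence \<phi> \<Longrightarrow> sentence (subst_Rel f \<phi>)"
  using fv_subst_Rel unfolding sentence_def by blast

lemma sat_subst_Rel:
  assumes "defines_in T R f Q" and "range v \<subseteq> dom_t T"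
  shows "sat T R v V (subst_Rel f \<phi>) = sat T Q v V \<phi>"
  using assms(2)
proof (induction \<phi> arbitrary: v V)
  case (Ex1 x \<phi>)
  have "sat T R (v(x := u)) V (subst_Rel f \<phi>) = sat T Q (v(x := u)) V \<phi>" if "u \<in> dom_t T" for u
    using Ex1.prems that by (intro Ex1.IH) auto
  then show ?case by simp
qed (use assms(1) in \<open>auto simp: defines_in_def\<close>)

lemma models_subst_Rel:
  "is_utree T \<Longrightarrow> defines_in T R f Q \<Longrightarrow> models T R (subst_Rel f \<phi>) = models T Q \<phi>"
  unfolding models_def by (rule sat_subst_Rel) (auto simp: utree_root)

definition invariant_under ::
    "('a utree \<Rightarrow> (nat list \<times> nat list) set \<Rightarrow> bool) \<Rightarrow> 'a mso \<Rightarrow> bool" where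
  "invariant_under K \<phi> \<longleftrightarrow> (\<forall>T R1 R2. is_utree T \<longrightarrow> K T R1 \<longrightarrow> K T R2 \<longrightarrow>
      (models T R1 \<phi> \<longleftrightarrow> models T R2 \<phi>))"

definition invariantly_definable ::
    "('a utree \<Rightarrow> (nat list \<times> nat list) set \<Rightarrow> bool) \<Rightarrow> 'a utree set \<Rightarrow> bool" where
  "invariantly_definable K S \<longleftrightarrow> (\<exists>\<phi>. sentence \<phi> \<and> invariant_under K \<phi> \<and>
      S = {T. is_utree T \<and> (\<exists>R. K T R \<and> models T R \<phi>)})"

lemma order_inv_definable_iff: "order_inv_definable S \<longleftrightarrow> invariantly_definable linord_of S"
  unfolding order_inv_definable_def invariantly_definable_def order_invariant_def
    invariant_under_def ..

lemma sibling_inv_definable_iff: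
  "sibling_inv_definable S \<longleftrightarrow> invariantly_definable sibord_of S"
  unfolding sibling_inv_definable_def invariantly_definable_def sibling_invariant_def
    invariant_under_def ..

lemma invariantly_definable_transfer:
  assumes maps: "\<And>T R. is_utree T \<Longrightarrow> K T R \<Longrightarrow> K' T (F T R)"
    and nonempty: "\<And>T. is_utree T \<Longrightarrow> \<exists>R. K T R"
    and definable: "\<And>T R. is_utree T \<Longrightarrow> K T R \<Longrightarrow> defines_in T R f (F T R)"
    and "binary_fm f"
    and "invariantly_definable K' S"
  shows "invariantly_definable K S"
proof -
  obtain \<phi> where "sentence \<phi>" and inv: "invariant_under K' \<phi>"
    and S: "S = {T. is_utree T \<and> (\<exists>R. K' T R \<and> models T R \<phi>)}"
    using assms(5) unfolding invariantly_definable_def by blast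
  let ?\<psi> = "subst_Rel f \<phi>"
  have models_\<psi>: "models T R ?\<psi> = models T (F T R) \<phi>" if "is_utree T" "K T R" for T R
    using models_subst_Rel definable that by blast
  have "invariant_under K ?\<psi>"
    using inv maps by (simp add: invariant_under_def models_\<psi>)
  moreover have "(\<exists>R. K' T R \<and> models T R \<phi>) \<longleftrightarrow> (\<exists>R. K T R \<and> models T R ?\<psi>)"
    if "is_utree T" for T
  proof
    assume "\<exists>R'. K' T R' \<and> models T R' \<phi>"
    moreover obtain R where "K T R" using nonempty \<open>is_utree T\<close> by blast
    ultimately show "\<exists>R. K T R \<and> models T R ?\<psi>"
      using inv maps models_\<psi> \<open>is_utree T\<close> unfolding invariant_under_def by blast
  qed (use maps models_\<psi> that in blast)
  ultimately show ?thesis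
    unfolding invariantly_definable_def S
    using sentence_subst_Rel[OF \<open>binary_fm f\<close> \<open>sentence \<phi>\<close>] by blast
qed

section \<open>The sibling order induced by a linear order\<close>

lemma strict_linear_order_on_restrict:
  assumes "strict_linear_order_on A r" and "B \<subseteq> A"
  shows "strict_linear_order_on B (r \<inter> B \<times> B)"
  using assms unfolding strict_linear_order_on_def trans_def irrefl_def total_on_def by blast

definition sibling_part :: "(nat list \<times> nat list) set \<Rightarrow> (nat list \<times> nat list) set" where
  "sibling_part R = {(u, w) \<in> R. \<exists>s i j. u = s @ [i] \<and> w = s @ [j] \<and> i \<noteq> j}"

lemma sibord_of_sibling_part:
  assumes T: "is_utree T" and R: "linord_of T R"
  shows "sibord_of T (sibling_part R)"
  unfolding sibord_of_def
proof (intro conjI ballI)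
  show "sibling_part R \<subseteq> dom_t T \<times> dom_t T"
    using R unfolding linord_of_def sibling_part_def by blast
  fix p assume "p \<in> sibling_part R"
  then obtain s i j where "p = (s @ [i], s @ [j])" "i \<noteq> j" "s @ [i] \<in> dom_t T"
    using R unfolding linord_of_def sibling_part_def by blast
  then show "case p of (u, w) \<Rightarrow> \<exists>s i j. s \<in> dom_t T \<and> u = s @ [i] \<and> w = s @ [j] \<and> i \<noteq> j"
    using utree_prefix_closed[OF T] by auto
next
  fix s
  let ?C = "children (dom_t T) s"
  have "irrefl R" using R unfolding linord_of_def strict_linear_order_on_def by blast
  then have "sibling_part R \<inter> ?C \<times> ?C = R \<inter> ?C \<times> ?C"
    unfolding sibling_part_def children_def irrefl_def by auto
  moreover have "strict_linear_order_on ?C (R \<inter> ?C \<times> ?C)"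
    using R by (intro strict_linear_order_on_restrict) (auto simp: linord_of_def children_def)
  ultimately show "strict_linear_order_on ?C (sibling_part R \<inter> ?C \<times> ?C)"
    by simp
qed

lemma desc_length: "desc s t \<Longrightarrow> length s < length t"
  by (auto simp: desc_def)

lemma child_iff_no_intermediate:
  assumes T: "is_utree T" and u: "u \<in> dom_t T"
  shows "desc p u \<and> \<not> (\<exists>w\<in>dom_t T. desc p w \<and> desc w u) \<longleftrightarrow> (\<exists>i. u = p @ [i])"
proof
  assume no_intermediate: "desc p u \<and> \<not> (\<exists>w\<in>dom_t T. desc p w \<and> desc w u)"
  then obtain a r where u_eq: "u = p @ a # r"
    by (auto simp: desc_def neq_Nil_conv)
  have "p @ [a] \<in> dom_t T"
    using utree_prefix_closed[OF T, of "p @ [a]" r] u u_eq by simp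
  moreover have "desc p (p @ [a])" by (simp add: desc_def)
  ultimately have "\<not> desc (p @ [a]) u" using no_intermediate by blast
  then show "\<exists>i. u = p @ [i]" using u_eq by (auto simp: desc_def)
next
  assume "\<exists>i. u = p @ [i]"
  then have "desc p u" and "length u = Suc (length p)" by (auto simp: desc_def)
  moreover have "\<not> (desc p w \<and> desc w u)" for w
    using desc_length[of p w] desc_length[of w u] \<open>length u = Suc (length p)\<close> by linarith
  ultimately show "desc p u \<and> \<not> (\<exists>w\<in>dom_t T. desc p w \<and> desc w u)" by blast
qed

definition Child_fm :: "nat \<Rightarrow> nat \<Rightarrow> nat \<Rightarrow> 'a mso" where
  "Child_fm w p u = Conj (Desc p u) (Neg (Ex1 w (Conj (Desc p w) (Desc w u))))"

lemma sat_Child_fm: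
  assumes "is_utree T" "range v \<subseteq> dom_t T" "w \<noteq> p" "w \<noteq> u"
  shows "sat T R v V (Child_fm w p u) \<longleftrightarrow> (\<exists>i. v u = v p @ [i])"
  using assms child_iff_no_intermediate[OF assms(1), of "v u" "v p"]
  by (auto simp: Child_fm_def)

text \<open>Here and in \<open>Doc_order_fm\<close> the bound variables \<open>x + y + 1\<close> and \<open>x + y + 2\<close> are
  fresh for \<open>x\<close> and \<open>y\<close>.\<close>

definition Sibling_part_fm :: "nat \<Rightarrow> nat \<Rightarrow> 'a mso" where
  "Sibling_part_fm x y = Conj (Rel x y) (Conj (Neg (Eq x y))
     (Ex1 (x + y + 1)
       (Conj (Child_fm (x + y + 2) (x + y + 1) x) (Child_fm (x + y + 2) (x + y + 1) y))))"

lemma binary_Sibling_part_fm: "binary_fm Sibling_part_fm"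
  by (auto simp: binary_fm_def Sibling_part_fm_def Child_fm_def)

lemma defines_sibling_part:
  assumes T: "is_utree T"
  shows "defines_in T R Sibling_part_fm (sibling_part R)"
  unfolding defines_in_def
proof (intro allI impI)
  fix v :: "nat \<Rightarrow> nat list" and V x y assume v: "range v \<subseteq> dom_t T"
  have child: "sat T R (v(x + y + 1 := s)) V (Child_fm (x + y + 2) (x + y + 1) z) \<longleftrightarrow>
      (\<exists>i. v z = s @ [i])" if "s \<in> dom_t T" "z \<in> {x, y}" for s z
  proof -
    have "range (v(x + y + 1 := s)) \<subseteq> dom_t T" using v that(1) by auto
    from sat_Child_fm[OF T this] show ?thesis using that(2) by auto
  qed
  have "sat T R v V (Sibling_part_fm x y) \<longleftrightarrow> (v x, v y) \<in> R \<and> v x \<noteq> v y \<and>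
      (\<exists>s\<in>dom_t T. (\<exists>i. v x = s @ [i]) \<and> (\<exists>j. v y = s @ [j]))"
    using child by (simp add: Sibling_part_fm_def del: fun_upd_apply)
  also have "\<dots> \<longleftrightarrow> (v x, v y) \<in> sibling_part R"
  proof -
    have "v x \<in> dom_t T" using v by auto
    then have "s \<in> dom_t T" if "v x = s @ [i]" for s i
      using utree_prefix_closed[OF T, of s "[i]"] that by simp
    then show ?thesis unfolding sibling_part_def by auto
  qed
  finally show "sat T R v V (Sibling_part_fm x y) = ((v x, v y) \<in> sibling_part R)" .
qed

section \<open>The document order induced by a sibling order\<close>

lemma sibord_of_pair:
  "sibord_of T R \<Longrightarrow> (a, b) \<in> R \<Longrightarrow>
    \<exists>s i j. s \<in> dom_t T \<and> a = s @ [i] \<and> b = s @ [j] \<and> i \<noteq> j"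
  unfolding sibord_of_def by blast

lemma sibord_of_trans:
  assumes T: "is_utree T" and R: "sibord_of T R"
    and "(s @ [i], s @ [j]) \<in> R" "(s @ [j], s @ [k]) \<in> R"
  shows "(s @ [i], s @ [k]) \<in> R"
proof -
  let ?C = "children (dom_t T) s"
  have "s \<in> dom_t T" using sibord_of_pair[OF R assms(3)] by auto
  then have "trans (R \<inter> ?C \<times> ?C)"
    using R unfolding sibord_of_def strict_linear_order_on_def by blast
  moreover have "s @ [i] \<in> ?C" "s @ [j] \<in> ?C" "s @ [k] \<in> ?C"
    using R assms(3,4) unfolding sibord_of_def children_def by auto
  ultimately show ?thesis using assms(3,4) unfolding trans_def by blast
qed

lemma sibord_of_total:
  assumes T: "is_utree T" and R: "sibord_of T R"
    and "s @ [i] \<in> dom_t T" "s @ [j] \<in> dom_t T" "i \<noteq> j"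
  shows "(s @ [i], s @ [j]) \<in> R \<or> (s @ [j], s @ [i]) \<in> R"
proof -
  let ?C = "children (dom_t T) s"
  have "s \<in> dom_t T" using utree_prefix_closed[OF T assms(3)] .
  then have "total_on ?C (R \<inter> ?C \<times> ?C)"
    using R unfolding sibord_of_def strict_linear_order_on_def by blast
  moreover have "s @ [i] \<in> ?C" "s @ [j] \<in> ?C"
    using assms(3,4) unfolding children_def by auto
  ultimately show ?thesis using assms(5) unfolding total_on_def by blast
qed

lemma desc_iff_strict_prefix: "desc s t \<longleftrightarrow> strict_prefix s t"
  by (auto simp: desc_def strict_prefix_def prefix_def)

lemma strict_prefix_Cons_append: "prefix x s \<Longrightarrow> strict_prefix x (s @ j # t)"
  by (rule prefix_order.le_less_trans[OF _ strict_prefixI'[OF refl]])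

lemma append_eq_append_Cons_cases:
  "x @ t = s @ i # t' \<Longrightarrow> prefix x s \<or> (\<exists>r. x = s @ i # r)"
  by (metis Cons_prefix_Cons append.right_neutral list.exhaust prefixE prefixI
      prefix_same_cases same_prefix_prefix)

definition doc_precedes :: "(nat list \<times> nat list) set \<Rightarrow> nat list \<Rightarrow> nat list \<Rightarrow> bool" where
  "doc_precedes R u w \<longleftrightarrow> strict_prefix u w \<or>
     (\<exists>s i j t t'. (s @ [i], s @ [j]) \<in> R \<and> u = s @ i # t \<and> w = s @ j # t')"

definition doc_order :: "nat list set \<Rightarrow> (nat list \<times> nat list) set \<Rightarrow> (nat list \<times> nat list) set" where
  "doc_order D R = {(u, w). u \<in> D \<and> w \<in> D \<and> doc_precedes R u w}"

lemma doc_precedesI_prefix: "strict_prefix u w \<Longrightarrow> doc_precedes R u w"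
  unfolding doc_precedes_def ..

lemma doc_precedesI_branch: "(s @ [i], s @ [j]) \<in> R \<Longrightarrow> doc_precedes R (s @ i # t) (s @ j # t')"
  unfolding doc_precedes_def by blast

lemma doc_precedesE [consumes 1, case_names prefix branch]:
  assumes "doc_precedes R u w"
  obtains "strict_prefix u w"
    | s i j t t' where "(s @ [i], s @ [j]) \<in> R" "u = s @ i # t" "w = s @ j # t'"
  using assms unfolding doc_precedes_def by blast

lemma doc_precedes_irrefl: "(\<And>a. (a, a) \<notin> R) \<Longrightarrow> \<not> doc_precedes R u u"
  unfolding doc_precedes_def by auto

lemma doc_precedes_prefix_right:
  assumes xy: "doc_precedes R x y" and "prefix y z"
  shows "doc_precedes R x z"
  using xy
proof (cases rule: doc_precedesE)
  case prefix
  then show ?thesis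
    using \<open>prefix y z\<close> by (blast intro: doc_precedesI_prefix prefix_order.less_le_trans)
next
  case (branch s i j t t')
  obtain u where "z = y @ u" using \<open>prefix y z\<close> by (rule prefixE)
  then show ?thesis using branch by (simp add: doc_precedesI_branch)
qed

lemma doc_precedes_strict_prefix_left:
  assumes xy: "strict_prefix x y" and yz: "doc_precedes R y z"
  shows "doc_precedes R x z"
  using yz
proof (cases rule: doc_precedesE)
  case prefix
  with xy have "strict_prefix x z" by (rule prefix_order.less_trans)
  then show ?thesis by (rule doc_precedesI_prefix)
next
  case (branch s i j t t')
  obtain u where "x @ u = s @ i # t"
    using xy \<open>y = s @ i # t\<close> unfolding strict_prefix_def prefix_def by blast
  from append_eq_append_Cons_cases[OF this] consider "prefix x s" | r where "x = s @ i # r"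
    by blast
  then show ?thesis
  proof cases
    case 1
    then have "strict_prefix x z" using \<open>z = s @ j # t'\<close> strict_prefix_Cons_append by simp
    then show ?thesis by (rule doc_precedesI_prefix)
  next
    case 2
    then show ?thesis using branch by (simp add: doc_precedesI_branch)
  qed
qed

lemma doc_precedes_branch_trans:
  assumes R_trans: "\<And>s i j k. (s @ [i], s @ [j]) \<in> R \<Longrightarrow> (s @ [j], s @ [k]) \<in> R \<Longrightarrow>
      (s @ [i], s @ [k]) \<in> R"
    and R1: "(s @ [i], s @ [j]) \<in> R" and x: "x = s @ i # t" and y: "y = s @ j # t'"
    and R2: "(s' @ [i'], s' @ [j']) \<in> R" and y': "y = s' @ i' # r" and z: "z = s' @ j' # r'"
  shows "doc_precedes R x z"
proof -
  have "s @ j # t' = s' @ i' # r" using y y' by simp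
  from append_eq_append_Cons_cases[OF this] consider "prefix s s'" | q where "s = s' @ i' # q"
    by blast
  then show ?thesis
  proof cases
    case 1
    then obtain q where s': "s' = s @ q" by (auto simp: prefix_def)
    show ?thesis
    proof (cases q)
      case Nil
      then have "i' = j" and z_eq: "z = s @ j' # r'" using y y' z s' by simp_all
      then have "(s @ [i], s @ [j']) \<in> R" using R_trans[OF R1] R2 s' Nil by simp
      then show ?thesis using x z_eq by (simp add: doc_precedesI_branch)
    next
      case (Cons c q')
      then have "z = s @ j # (q' @ j' # r')" using y y' z s' by simp
      then show ?thesis using R1 x by (simp add: doc_precedesI_branch)
    qed
  next
    case 2
    then have "x = s' @ i' # (q @ i # t)" using x by simp
    then show ?thesis using R2 z by (simp add: doc_precedesI_branch)
  qed
qed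

lemma doc_precedes_trans:
  assumes R_trans: "\<And>s i j k. (s @ [i], s @ [j]) \<in> R \<Longrightarrow> (s @ [j], s @ [k]) \<in> R \<Longrightarrow>
      (s @ [i], s @ [k]) \<in> R"
    and xy: "doc_precedes R x y" and yz: "doc_precedes R y z"
  shows "doc_precedes R x z"
  using xy
proof (cases rule: doc_precedesE)
  case prefix
  then show ?thesis using yz by (rule doc_precedes_strict_prefix_left)
next
  case branch_xy: branch
  from yz show ?thesis
  proof (cases rule: doc_precedesE)
    case prefix
    then show ?thesis using xy doc_precedes_prefix_right prefix_order.less_imp_le by blast
  next
    case branch_yz: branch
    show ?thesis by (rule doc_precedes_branch_trans[OF R_trans branch_xy branch_yz])
  qed
qed

lemma linord_of_doc_order:
  assumes T: "is_utree T" and R: "sibord_of T R"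
  shows "linord_of T (doc_order (dom_t T) R)"
  unfolding linord_of_def strict_linear_order_on_def
proof (intro conjI)
  show "doc_order (dom_t T) R \<subseteq> dom_t T \<times> dom_t T"
    unfolding doc_order_def by blast
  have "doc_precedes R x z" if "doc_precedes R x y" "doc_precedes R y z" for x y z
    using that by (rule doc_precedes_trans[rotated]) (blast intro: sibord_of_trans[OF T R])
  then show "trans (doc_order (dom_t T) R)"
    unfolding doc_order_def trans_def by blast
  show "irrefl (doc_order (dom_t T) R)"
    using doc_precedes_irrefl sibord_of_pair[OF R]
    unfolding doc_order_def irrefl_def by blast
  show "total_on (dom_t T) (doc_order (dom_t T) R)"
    unfolding total_on_def
  proof (intro ballI impI)
    fix x y assume x: "x \<in> dom_t T" and y: "y \<in> dom_t T" and "x \<noteq> y"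
    have "doc_precedes R x y \<or> doc_precedes R y x"
    proof (cases "x \<parallel> y")
      case True
      then obtain s i j t t' where "i \<noteq> j" and xy: "x = s @ i # t" "y = s @ j # t'"
        using parallel_decomp by blast
      have "s @ [i] \<in> dom_t T" "s @ [j] \<in> dom_t T"
        using utree_prefix_closed[OF T, of "s @ [i]" t] utree_prefix_closed[OF T, of "s @ [j]" t']
          x y xy by simp_all
      from sibord_of_total[OF T R this \<open>i \<noteq> j\<close>] show ?thesis
        unfolding xy by (auto intro: doc_precedesI_branch)
    next
      case False
      then have "strict_prefix x y \<or> strict_prefix y x"
        using \<open>x \<noteq> y\<close> unfolding parallel_def strict_prefix_def by blast
      then show ?thesis by (auto intro: doc_precedesI_prefix)
    qed
    then show "(x, y) \<in> doc_order (dom_t T) R \<or> (y, x) \<in> doc_order (dom_t T) R"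
      using x y unfolding doc_order_def by blast
  qed
qed

definition Doc_order_fm :: "nat \<Rightarrow> nat \<Rightarrow> 'a mso" where
  "Doc_order_fm x y = Disj (Desc x y) (Ex1 (x + y + 1) (Ex1 (x + y + 2)
     (Conj (Rel (x + y + 1) (x + y + 2))
       (Conj (Disj (Eq (x + y + 1) x) (Desc (x + y + 1) x))
             (Disj (Eq (x + y + 2) y) (Desc (x + y + 2) y))))))"

lemma binary_Doc_order_fm: "binary_fm Doc_order_fm"
  by (auto simp: binary_fm_def Doc_order_fm_def)

lemma defines_doc_order:
  assumes R: "sibord_of T R"
  shows "defines_in T R Doc_order_fm (doc_order (dom_t T) R)"
  unfolding defines_in_def
proof (intro allI impI)
  fix v :: "nat \<Rightarrow> nat list" and V x y assume v: "range v \<subseteq> dom_t T"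
  have prefix_iff: "(a = u \<or> strict_prefix a u) \<longleftrightarrow> prefix a u" for a u
    by (auto simp: prefix_order.le_less)
  have "sat T R v V (Doc_order_fm x y) \<longleftrightarrow> strict_prefix (v x) (v y) \<or>
      (\<exists>a\<in>dom_t T. \<exists>b\<in>dom_t T. (a, b) \<in> R \<and> prefix a (v x) \<and> prefix b (v y))"
    by (simp add: Doc_order_fm_def prefix_iff desc_iff_strict_prefix)
  also have "\<dots> \<longleftrightarrow> doc_precedes R (v x) (v y)"
    unfolding doc_precedes_def
  proof (intro disj_cong refl iffI)
    assume "\<exists>a\<in>dom_t T. \<exists>b\<in>dom_t T. (a, b) \<in> R \<and> prefix a (v x) \<and> prefix b (v y)"
    then obtain a b where ab: "(a, b) \<in> R" "prefix a (v x)" "prefix b (v y)" by blast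
    moreover obtain s i j where "a = s @ [i]" "b = s @ [j]"
      using sibord_of_pair[OF R ab(1)] by blast
    ultimately show "\<exists>s i j t t'. (s @ [i], s @ [j]) \<in> R \<and> v x = s @ i # t \<and> v y = s @ j # t'"
      by (auto simp: prefix_def)
  next
    assume "\<exists>s i j t t'. (s @ [i], s @ [j]) \<in> R \<and> v x = s @ i # t \<and> v y = s @ j # t'"
    then obtain s i j t t' where "(s @ [i], s @ [j]) \<in> R" "v x = s @ i # t" "v y = s @ j # t'"
      by blast
    moreover have "R \<subseteq> dom_t T \<times> dom_t T" using R by (simp add: sibord_of_def)
    moreover have "prefix (s @ [i]) (v x)" "prefix (s @ [j]) (v y)"
      using calculation by (simp_all add: prefix_def)
    ultimately show "\<exists>a\<in>dom_t T. \<exists>b\<in>dom_t T. (a, b) \<in> R \<and> prefix a (v x) \<and> prefix b (v y)"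
      by blast
  qed
  finally show "sat T R v V (Doc_order_fm x y) = ((v x, v y) \<in> doc_order (dom_t T) R)"
    using v unfolding doc_order_def by auto
qed

lemma linord_of_lenlex: "linord_of T (lenlex less_than \<inter> dom_t T \<times> dom_t T)"
  unfolding linord_of_def
proof (intro conjI strict_linear_order_on_restrict)
  show "strict_linear_order_on UNIV (lenlex less_than)"
    unfolding strict_linear_order_on_def
    by (simp add: total_lenlex total_less_than irrefl_def lenlex_irreflexive lenlex_transI)
qed auto

lemma sibord_of_exists: "is_utree T \<Longrightarrow> \<exists>R. sibord_of T R"
  using sibord_of_sibling_part linord_of_lenlex by blast

theorem lemma4p2:
  fixes S :: "('a::finite) utree set"
  shows "order_inv_definable S \<longleftrightarrow> sibling_inv_definable S"
  unfolding order_inv_definable_iff sibling_inv_definable_iff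
proof
  assume "invariantly_definable linord_of S"
  then show "invariantly_definable sibord_of S"
    by (rule invariantly_definable_transfer[rotated 4,
          where F = "\<lambda>T. doc_order (dom_t T)" and f = Doc_order_fm])
      (simp_all add: linord_of_doc_order defines_doc_order binary_Doc_order_fm sibord_of_exists)
next
  assume "invariantly_definable sibord_of S"
  then show "invariantly_definable linord_of S"
    by (rule invariantly_definable_transfer[rotated 4,
          where F = "\<lambda>T. sibling_part" and f = Sibling_part_fm])
      (auto simp: sibord_of_sibling_part defines_sibling_part binary_Sibling_part_fm
        intro: linord_of_lenlex)
qed

end
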